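(* Assume: (i) $\nabla_\theta G$ is Lipschitz-continuous with constant $L_0$; (ii) $\|J_\theta f(x_i^u;\theta)\|\le M$ for all $i\in\{1,\dots,N^u\}$ and all $\theta$. If the learning rates satisfy $\alpha_t^2\beta_t<(4M^2L_0)^{-1}$, then each step of the algorithm decreases the labeled loss, regardless of which unlabeled mini-batch is selected: $$G(\theta_{t+1})\le G(\theta_t)\quad\text{for each }t.$$ Moreover, equality holds if and only if $\nabla\tilde y=0$ for the unlabeled batch selected at step $t$.
   Context: **Model and data.** Let $f(x;\theta)\in\mathbb{R}^C$ be a classifier, continuously differentiable in the parameter $\theta\in\mathbb{R}^d$. The labeled data are $\{(x_k^l,y_k)\}_{k=1}^{N^l}$ and the unlabeled data are $\mathcal D^u=\{x_i^u\}_{i=1}^{N^u}$. Write $J_\theta f(x;\theta)\in\mathbb{R}^{C\times d}$ for the Jacobian of $f$ in $\theta$, with $\|\cdot\|$ the operator norm. **Losses.** The loss of a pair is $\mathcal L(x,y;\theta)=\|f(x;\theta)-y\|_2^2$ (squared error). The labeled loss over the full labeled set is $$G(\theta)=\frac{1}{N^l}\sum_{k=1}^{N^l}\mathcal L(x_k^l,y_k;\theta).$$ **The algorithm (meta-gradient SSL).** Start from $\theta_1$, with regular learning rates $\alpha_t>0$ and meta learning rates $\beta_t>0$. All labeled data are used at every step. At step $t$: 1. An unlabeled mini-batch $x_1^u,\dots,x_{B^u}^u$ is sampled from $\mathcal D^u$. 2. For pseudo labels $\tilde y=(\tilde y_1,\dots,\tilde y_{B^u})$, regarded as one vector, set $$\tilde\theta_{t+1}(\tilde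 y)=\theta_t-\frac{\alpha_t}{B^u}\sum_{i=1}^{B^u}\nabla_\theta\mathcal L(x_i^u,\tilde y_i;\theta_t)$$ and $H(\tilde y)=G(\tilde\theta_{t+1}(\tilde y))$. 3. The pseudo labels are initialized at $\tilde y_i=f(x_i^u;\theta_t)$. 4. The meta-gradient is $\nabla\tilde y=\nabla_{\tilde y}H(\tilde y)$, evaluated at this initialization. 5. The pseudo labels are updated as $\hat y=\tilde y-\beta_t\nabla\tilde y$. 6. The parameters are updated as $\theta_{t+1}=\tilde\theta_{t+1}(\hat y)=\theta_t-\frac{\alpha_t}{B^u}\sum_{i=1}^{B^u}\nabla_\theta\mathcal L(x_i^u,\hat y_i;\theta_t)$. *)

theory Defs
  imports "HOL-Analysis.Analysis"
begin

definition grad :: "('a::real_inner \<Rightarrow> real) \<Rightarrow> 'a \<Rightarrow> 'a" where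
  "grad F x = (THE g. (F has_derivative (\<lambda>h. g \<bullet> h)) (at x))"

definition sqloss :: "('x \<Rightarrow> real^'d \<Rightarrow> real^'c) \<Rightarrow> 'x \<Rightarrow> real^'c \<Rightarrow> real^'d \<Rightarrow> real" where
  "sqloss f x y \<theta> = (norm (f x \<theta> - y))\<^sup>2"

definition labeled_loss ::
  "('x \<Rightarrow> real^'d \<Rightarrow> real^'c) \<Rightarrow> (nat \<Rightarrow> 'x) \<Rightarrow> (nat \<Rightarrow> real^'c) \<Rightarrow> nat \<Rightarrow> real^'d \<Rightarrow> real" where
  "labeled_loss f xl yl Nl \<theta> = (1 / real Nl) * (\<Sum>k = 1..Nl. sqloss f (xl k) (yl k) \<theta>)"

text \<open>Virtual update theta~_{t+1}(y~) for a mini-batch xb indexed by the finite type 'b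
  (batch size B = CARD('b)), pseudo labels y~ :: real^'c^'b.\<close>
definition virtual_step ::
  "('x \<Rightarrow> real^'d \<Rightarrow> real^'c) \<Rightarrow> real \<Rightarrow> ('b::finite \<Rightarrow> 'x) \<Rightarrow> real^'d \<Rightarrow> real^'c^'b \<Rightarrow> real^'d" where
  "virtual_step f \<alpha> xb \<theta> yt =
     \<theta> - (\<alpha> / real CARD('b)) *\<^sub>R (\<Sum>i\<in>UNIV. grad (\<lambda>\<theta>'. sqloss f (xb i) (yt $ i) \<theta>') \<theta>)"

definition meta_obj ::
  "('x \<Rightarrow> real^'d \<Rightarrow> real^'c) \<Rightarrow> (nat \<Rightarrow> 'x) \<Rightarrow> (nat \<Rightarrow> real^'c) \<Rightarrow> nat \<Rightarrow> real
    \<Rightarrow> ('b::finite \<Rightarrow> 'x) \<Rightarrow> real^'d \<Rightarrow> real^'c^'b \<Rightarrow> real" where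
  "meta_obj f xl yl Nl \<alpha> xb \<theta> yt = labeled_loss f xl yl Nl (virtual_step f \<alpha> xb \<theta> yt)"

definition init_labels :: "('x \<Rightarrow> real^'d \<Rightarrow> real^'c) \<Rightarrow> ('b::finite \<Rightarrow> 'x) \<Rightarrow> real^'d \<Rightarrow> real^'c^'b" where
  "init_labels f xb \<theta> = (\<chi> i. f (xb i) \<theta>)"

definition meta_grad ::
  "('x \<Rightarrow> real^'d \<Rightarrow> real^'c) \<Rightarrow> (nat \<Rightarrow> 'x) \<Rightarrow> (nat \<Rightarrow> real^'c) \<Rightarrow> nat \<Rightarrow> real
    \<Rightarrow> ('b::finite \<Rightarrow> 'x) \<Rightarrow> real^'d \<Rightarrow> real^'c^'b" where
  "meta_grad f xl yl Nl \<alpha> xb \<theta> =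
     grad (meta_obj f xl yl Nl \<alpha> xb \<theta>) (init_labels f xb \<theta>)"

definition meta_step ::
  "('x \<Rightarrow> real^'d \<Rightarrow> real^'c) \<Rightarrow> (nat \<Rightarrow> 'x) \<Rightarrow> (nat \<Rightarrow> real^'c) \<Rightarrow> nat \<Rightarrow> real \<Rightarrow> real
    \<Rightarrow> ('b::finite \<Rightarrow> 'x) \<Rightarrow> real^'d \<Rightarrow> real^'d" where
  "meta_step f xl yl Nl \<alpha> \<beta> xb \<theta> =
     virtual_step f \<alpha> xb \<theta>
       (init_labels f xb \<theta> - \<beta> *\<^sub>R meta_grad f xl yl Nl \<alpha> xb \<theta>)"

text \<open>The iterates theta_t (t = 1, 2, ...; index 0 is unused and set to theta_1),
  with rates alpha t, beta t and selected mini-batch xb t at step t.\<close>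
fun iterate ::
  "('x \<Rightarrow> real^'d \<Rightarrow> real^'c) \<Rightarrow> (nat \<Rightarrow> 'x) \<Rightarrow> (nat \<Rightarrow> real^'c) \<Rightarrow> nat \<Rightarrow> (nat \<Rightarrow> real) \<Rightarrow> (nat \<Rightarrow> real)
    \<Rightarrow> (nat \<Rightarrow> 'b::finite \<Rightarrow> 'x) \<Rightarrow> real^'d \<Rightarrow> nat \<Rightarrow> real^'d" where
  "iterate f xl yl Nl \<alpha> \<beta> xb \<theta>1 0 = \<theta>1"
| "iterate f xl yl Nl \<alpha> \<beta> xb \<theta>1 (Suc 0) = \<theta>1"
| "iterate f xl yl Nl \<alpha> \<beta> xb \<theta>1 (Suc (Suc t)) =
     meta_step f xl yl Nl (\<alpha> (Suc t)) (\<beta> (Suc t)) (xb (Suc t)) (iterate f xl yl Nl \<alpha> \<beta> xb \<theta>1 (Suc t))"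

end

theory Submission imports Defs begin

text \<open>The virtual step is affine in the pseudo labels, so the meta-gradient is
  \<open>\<nabla>y\<^sub>i = (2\<alpha>/B) J\<^sub>i \<nabla>G(\<theta>)\<close>, and the actual update is \<open>\<theta> - \<beta> d\<close> with
  \<open>d = (2\<alpha>/B) \<Sum>\<^sub>i J\<^sub>i\<^sup>T \<nabla>y\<^sub>i\<close>. Hence \<open>\<nabla>G(\<theta>) \<bullet> d = \<parallel>\<nabla>y\<parallel>\<^sup>2\<close> and \<open>\<parallel>d\<parallel> \<le> 2\<alpha>M \<parallel>\<nabla>y\<parallel>\<close>,
  and the descent lemma for the \<open>L\<^sub>0\<close>-smooth loss \<open>G\<close> gives
  \<open>G(\<theta> - \<beta> d) \<le> G(\<theta>) - \<beta> \<parallel>\<nabla>y\<parallel>\<^sup>2 (1 - 2 L\<^sub>0 \<alpha>\<^sup>2 \<beta> M\<^sup>2)\<close>, whose bracket is positive under the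
  rate condition.\<close>

lemma grad_eqI:
  fixes F :: "'a::real_inner \<Rightarrow> real"
  assumes "(F has_derivative (\<lambda>h. g \<bullet> h)) (at x)"
  shows "grad F x = g"
  unfolding grad_def
proof (rule the_equality)
  show "(F has_derivative (\<lambda>h. g \<bullet> h)) (at x)" by fact
  fix g' assume "(F has_derivative (\<lambda>h. g' \<bullet> h)) (at x)"
  then have "(\<lambda>h. g' \<bullet> h) = (\<lambda>h. g \<bullet> h)" using assms has_derivative_unique by blast
  then have "(g' - g) \<bullet> (g' - g) = 0" by (metis inner_diff_left right_minus_eq)
  then show "g' = g" by simp
qed

lemma has_derivative_sqloss:
  fixes f :: "'x \<Rightarrow> real^'d \<Rightarrow> real^'c"
  assumes "f x differentiable (at \<theta>)"
  shows "(sqloss f x y has_derivative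
     (\<lambda>h. (2 *\<^sub>R (transpose (jacobian (f x) (at \<theta>)) *v (f x \<theta> - y))) \<bullet> h)) (at \<theta>)"
proof -
  let ?J = "jacobian (f x) (at \<theta>)"
  have "(f x has_derivative (\<lambda>h. ?J *v h)) (at \<theta>)"
    using assms jacobian_works by blast
  then have d: "((\<lambda>\<theta>'. f x \<theta>' - y) has_derivative (\<lambda>h. ?J *v h)) (at \<theta>)"
    by (rule has_derivative_eq_rhs[OF has_derivative_diff[OF _ has_derivative_const]]) simp
  have "((\<lambda>\<theta>'. (f x \<theta>' - y) \<bullet> (f x \<theta>' - y)) has_derivative
      (\<lambda>h. (f x \<theta> - y) \<bullet> (?J *v h) + (?J *v h) \<bullet> (f x \<theta> - y))) (at \<theta>)"
    by (rule has_derivative_inner[OF d d])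
  moreover have "(f x \<theta> - y) \<bullet> (?J *v h) + (?J *v h) \<bullet> (f x \<theta> - y)
      = (2 *\<^sub>R (transpose ?J *v (f x \<theta> - y))) \<bullet> h" for h
  proof -
    have "(f x \<theta> - y) \<bullet> (?J *v h) = (transpose ?J *v (f x \<theta> - y)) \<bullet> h"
      by (simp add: dot_lmul_matrix)
    then show ?thesis
      unfolding inner_scaleR_left by (simp add: inner_commute[of "?J *v h"])
  qed
  ultimately show ?thesis
    unfolding sqloss_def[abs_def] power2_norm_eq_inner by simp
qed

lemma grad_sqloss:
  fixes f :: "'x \<Rightarrow> real^'d \<Rightarrow> real^'c"
  assumes "f x differentiable (at \<theta>)"
  shows "grad (sqloss f x y) \<theta> = 2 *\<^sub>R (transpose (jacobian (f x) (at \<theta>)) *v (f x \<theta> - y))"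
  by (rule grad_eqI[OF has_derivative_sqloss[where f=f, OF assms]])

lemma has_derivative_labeled_loss:
  fixes f :: "'x \<Rightarrow> real^'d \<Rightarrow> real^'c"
  assumes "\<And>k. f (xl k) differentiable (at \<theta>)"
  shows "(labeled_loss f xl yl Nl has_derivative
     (\<lambda>h. grad (labeled_loss f xl yl Nl) \<theta> \<bullet> h)) (at \<theta>)"
proof -
  let ?g = "\<lambda>k. 2 *\<^sub>R (transpose (jacobian (f (xl k)) (at \<theta>)) *v (f (xl k) \<theta> - yl k))"
  have "(labeled_loss f xl yl Nl has_derivative
      (\<lambda>h. (1 / real Nl) * (\<Sum>k = 1..Nl. ?g k \<bullet> h))) (at \<theta>)"
    unfolding labeled_loss_def[abs_def]
    by (intro has_derivative_mult_right has_derivative_sum has_derivative_sqloss[where f=f, OF assms])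
  then have "(labeled_loss f xl yl Nl has_derivative
      (\<lambda>h. ((1 / real Nl) *\<^sub>R (\<Sum>k = 1..Nl. ?g k)) \<bullet> h)) (at \<theta>)"
    by (simp only: inner_scaleR_left inner_sum_left)
  then show ?thesis
    by (simp only: grad_eqI)
qed

lemma lipschitz_const_nonneg:
  fixes g :: "'a::real_normed_vector \<Rightarrow> 'b::real_normed_vector"
    and a b :: 'a
  assumes "\<And>x y. norm (g x - g y) \<le> L * norm (x - y)" and "a \<noteq> b"
  shows "L \<ge> 0"
proof -
  have "0 \<le> L * norm (a - b)" using assms(1) norm_ge_zero order_trans by metis
  moreover have "norm (a - b) > 0" using assms(2) by simp
  ultimately show ?thesis by (simp add: zero_le_mult_iff)
qed

lemma descent_lemma:
  fixes G :: "'a::real_inner \<Rightarrow> real"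
  assumes D: "\<And>y. (G has_derivative (\<lambda>h. gr y \<bullet> h)) (at y)"
    and L: "\<And>y z. norm (gr y - gr z) \<le> L * norm (y - z)"
  shows "G (x - s) \<le> G x - gr x \<bullet> s + L / 2 * (norm s)\<^sup>2"
proof -
  define \<phi> where "\<phi> \<tau> = G (x - \<tau> *\<^sub>R s) + \<tau> * (gr x \<bullet> s) - L / 2 * \<tau>\<^sup>2 * (norm s)\<^sup>2" for \<tau> :: real
  have "\<phi> 1 \<le> \<phi> 0"
  proof (rule DERIV_nonpos_imp_nonincreasing[of 0 1 \<phi>])
    fix \<tau> :: real assume \<tau>: "0 \<le> \<tau>" "\<tau> \<le> 1"
    have "((\<lambda>\<tau>. x - \<tau> *\<^sub>R s) has_derivative (\<lambda>h. - (h *\<^sub>R s))) (at \<tau>)"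
      by (auto intro!: derivative_eq_intros)
    from has_derivative_compose[OF this D]
    have G_line: "((\<lambda>\<tau>. G (x - \<tau> *\<^sub>R s)) has_field_derivative (- (gr (x - \<tau> *\<^sub>R s) \<bullet> s))) (at \<tau>)"
      by (rule has_derivative_imp_has_field_derivative) simp
    have "(\<phi> has_field_derivative
        (- (gr (x - \<tau> *\<^sub>R s) \<bullet> s) + gr x \<bullet> s - L / 2 * (2 * \<tau>) * (norm s)\<^sup>2)) (at \<tau>)"
      unfolding \<phi>_def by (rule derivative_eq_intros G_line refl | simp)+
    moreover have "- (gr (x - \<tau> *\<^sub>R s) \<bullet> s) + gr x \<bullet> s - L / 2 * (2 * \<tau>) * (norm s)\<^sup>2 \<le> 0"
    proof -
      have "(gr x - gr (x - \<tau> *\<^sub>R s)) \<bullet> s \<le> norm (gr x - gr (x - \<tau> *\<^sub>R s)) * norm s"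
        by (rule norm_cauchy_schwarz)
      also have "\<dots> \<le> L * norm (x - (x - \<tau> *\<^sub>R s)) * norm s"
        by (rule mult_right_mono[OF L]) simp
      also have "\<dots> = L * \<tau> * (norm s)\<^sup>2" using \<tau> by (simp add: power2_eq_square)
      finally show ?thesis by (simp add: inner_diff_left)
    qed
    ultimately show "\<exists>y. (\<phi> has_real_derivative y) (at \<tau>) \<and> y \<le> 0" by blast
  qed simp
  then show ?thesis unfolding \<phi>_def by simp
qed

lemma descent_step_decrease:
  fixes G :: "'a::real_inner \<Rightarrow> real"
  assumes D: "\<And>y. (G has_derivative (\<lambda>h. gr y \<bullet> h)) (at y)"
    and L: "\<And>y z. norm (gr y - gr z) \<le> L * norm (y - z)" "L \<ge> 0"
    and slope: "gr x \<bullet> d = n" and n: "n \<ge> 0" and size: "(norm d)\<^sup>2 \<le> K * n"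
    and \<beta>: "\<beta> > 0" and rate: "L * \<beta> * K < 2"
  shows "G (x - \<beta> *\<^sub>R d) \<le> G x"
    and "G (x - \<beta> *\<^sub>R d) = G x \<longleftrightarrow> n = 0"
proof -
  have "G (x - \<beta> *\<^sub>R d) \<le> G x - \<beta> * n + L / 2 * \<beta>\<^sup>2 * (norm d)\<^sup>2"
    using descent_lemma[OF D L(1), of x "\<beta> *\<^sub>R d"] slope \<beta> by (simp add: power_mult_distrib)
  also have "\<dots> \<le> G x - \<beta> * n + L / 2 * \<beta>\<^sup>2 * (K * n)"
    using size L(2) by (simp add: mult_left_mono)
  also have "\<dots> = G x - \<beta> * n * (1 - L * \<beta> * K / 2)"
    by (simp add: algebra_simps power2_eq_square)
  finally have bound: "G (x - \<beta> *\<^sub>R d) \<le> G x - \<beta> * n * (1 - L * \<beta> * K / 2)" .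
  have margin: "1 - L * \<beta> * K / 2 > 0" using rate by simp
  then show "G (x - \<beta> *\<^sub>R d) \<le> G x"
    using bound \<beta> n by (smt (verit) mult_nonneg_nonneg)
  show "G (x - \<beta> *\<^sub>R d) = G x \<longleftrightarrow> n = 0"
  proof
    assume "n = 0"
    with size have "d = 0" by simp
    then show "G (x - \<beta> *\<^sub>R d) = G x" by simp
  next
    assume eq: "G (x - \<beta> *\<^sub>R d) = G x"
    show "n = 0"
    proof (rule ccontr)
      assume "n \<noteq> 0"
      with n \<beta> margin have "\<beta> * n * (1 - L * \<beta> * K / 2) > 0" by simp
      with bound eq show False by linarith
    qed
  qed
qed

lemma norm_transpose_mult_le:
  fixes A :: "real^'n^'m" and M :: real
  assumes "onorm (\<lambda>h. A *v h) \<le> M"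
  shows "norm (transpose A *v v) \<le> M * norm v"
proof -
  let ?w = "transpose A *v v"
  have M: "M \<ge> 0"
    using assms onorm_pos_le[OF matrix_vector_mul_bounded_linear] by (rule order_trans[rotated])
  have "norm ?w * norm ?w = ?w \<bullet> ?w"
    by (metis power2_eq_square power2_norm_eq_inner)
  also have "\<dots> = v \<bullet> (A *v ?w)"
    by (simp add: dot_lmul_matrix)
  also have "\<dots> \<le> norm v * norm (A *v ?w)"
    by (rule norm_cauchy_schwarz)
  also have "\<dots> \<le> norm v * (M * norm ?w)"
    using onorm[OF matrix_vector_mul_bounded_linear, of A ?w] assms
    by (meson mult_left_mono mult_right_mono norm_ge_zero order_trans)
  finally show ?thesis
    using M by (cases "?w = 0") (auto simp: mult.commute mult.left_commute)
qed

lemma inner_sum_transpose_mult: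
  fixes J :: "'b::finite \<Rightarrow> real^'n^'m" and v :: "real^'m^'b"
  shows "g \<bullet> (\<Sum>i\<in>UNIV. transpose (J i) *v (v $ i)) = v \<bullet> (\<chi> i. J i *v g)"
proof -
  have "g \<bullet> (\<Sum>i\<in>UNIV. transpose (J i) *v (v $ i)) = (\<Sum>i\<in>UNIV. v $ i \<bullet> (J i *v g))"
    by (simp add: inner_sum_right inner_commute[of g] dot_lmul_matrix)
  also have "\<dots> = v \<bullet> (\<chi> i. J i *v g)"
    by (simp only: inner_vec_def[of v] vec_lambda_beta)
  finally show ?thesis .
qed

lemma norm_sum_transpose_mult_le:
  fixes J :: "'b::finite \<Rightarrow> real^'n^'m" and v :: "real^'m^'b" and M :: real
  assumes "\<And>i. onorm (\<lambda>h. J i *v h) \<le> M"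
  shows "norm (\<Sum>i\<in>UNIV. transpose (J i) *v (v $ i)) \<le> CARD('b) * M * norm v"
proof -
  have M: "M \<ge> 0"
    using assms onorm_pos_le[OF matrix_vector_mul_bounded_linear] by (rule order_trans[rotated])
  have "norm (\<Sum>i\<in>UNIV. transpose (J i) *v (v $ i)) \<le> (\<Sum>i\<in>UNIV. norm (transpose (J i) *v (v $ i)))"
    by (rule norm_sum)
  also have "\<dots> \<le> (\<Sum>i\<in>(UNIV::'b set). M * norm v)"
  proof (rule sum_mono)
    fix i
    have "norm (transpose (J i) *v (v $ i)) \<le> M * norm (v $ i)"
      by (rule norm_transpose_mult_le[OF assms])
    also have "\<dots> \<le> M * norm v"
      by (rule mult_left_mono[OF Finite_Cartesian_Product.norm_nth_le M])
    finally show "norm (transpose (J i) *v (v $ i)) \<le> M * norm v" .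
  qed
  also have "\<dots> = CARD('b) * M * norm v" by simp
  finally show ?thesis .
qed

lemma virtual_step_eq:
  fixes f :: "'x \<Rightarrow> real^'d \<Rightarrow> real^'c" and xb :: "'b::finite \<Rightarrow> 'x"
  assumes "\<And>i. f (xb i) differentiable (at \<theta>)"
  shows "virtual_step f \<alpha> xb \<theta> yt = \<theta> - (2 * \<alpha> / CARD('b)) *\<^sub>R
     (\<Sum>i\<in>UNIV. transpose (jacobian (f (xb i)) (at \<theta>)) *v (f (xb i) \<theta> - yt $ i))"
  unfolding virtual_step_def grad_sqloss[where f=f, OF assms]
  by (simp add: scaleR_sum_right[symmetric])

lemma meta_grad_eq:
  fixes f :: "'x \<Rightarrow> real^'d \<Rightarrow> real^'c" and xb :: "'b::finite \<Rightarrow> 'x"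
  assumes f_diff: "\<And>x \<theta>. f x differentiable (at \<theta>)"
  shows "meta_grad f xl yl Nl \<alpha> xb \<theta> = (\<chi> i. (2 * \<alpha> / CARD('b)) *\<^sub>R
            (jacobian (f (xb i)) (at \<theta>) *v grad (labeled_loss f xl yl Nl) \<theta>))"
proof -
  define c where "c = 2 * \<alpha> / CARD('b)"
  define J where "J i = jacobian (f (xb i)) (at \<theta>)" for i
  define G where "G = labeled_loss f xl yl Nl"
  define g where "g = grad G \<theta>"
  define V where "V yt = \<theta> - c *\<^sub>R (\<Sum>i\<in>UNIV. transpose (J i) *v (f (xb i) \<theta> - yt $ i))"
    for yt :: "real^'c^'b"
  have V: "virtual_step f \<alpha> xb \<theta> = V"
    by (rule ext) (simp add: virtual_step_eq f_diff V_def c_def J_def)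
  have V_init: "V (init_labels f xb \<theta>) = \<theta>"
    by (simp add: V_def init_labels_def)
  have "(V has_derivative (\<lambda>h. c *\<^sub>R (\<Sum>i\<in>UNIV. transpose (J i) *v (h $ i))))
      (at (init_labels f xb \<theta>))"
    unfolding V_def
    by (auto intro!: derivative_eq_intros bounded_linear.has_derivative[OF bounded_linear_vec_nth]
         bounded_linear.has_derivative[OF matrix_vector_mul_bounded_linear]
         simp: matrix_vector_mult_diff_distrib sum_negf simp del: transpose_matrix_vector)
  from has_derivative_compose[OF this has_derivative_labeled_loss[where f=f, OF f_diff]]
  have "((\<lambda>yt. G (V yt)) has_derivative
      (\<lambda>h. g \<bullet> (c *\<^sub>R (\<Sum>i\<in>UNIV. transpose (J i) *v (h $ i))))) (at (init_labels f xb \<theta>))"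
    unfolding V_init G_def g_def by simp
  moreover have "g \<bullet> (c *\<^sub>R (\<Sum>i\<in>UNIV. transpose (J i) *v (h $ i))) = (\<chi> i. c *\<^sub>R (J i *v g)) \<bullet> h"
    for h :: "real^'c^'b"
  proof -
    have "(\<chi> i. c *\<^sub>R (J i *v g)) = c *\<^sub>R (\<chi> i. J i *v g)" by (simp add: vec_eq_iff)
    then show ?thesis
      by (simp only: inner_scaleR_right inner_scaleR_left inner_sum_transpose_mult inner_commute[of h])
  qed
  ultimately have "grad (\<lambda>yt. G (V yt)) (init_labels f xb \<theta>) = (\<chi> i. c *\<^sub>R (J i *v g))"
    by (intro grad_eqI) simp
  then show ?thesis
    unfolding meta_grad_def meta_obj_def[abs_def] V G_def g_def c_def J_def .
qed

lemma meta_step_eq: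
  fixes f :: "'x \<Rightarrow> real^'d \<Rightarrow> real^'c" and xb :: "'b::finite \<Rightarrow> 'x"
  assumes "\<And>i. f (xb i) differentiable (at \<theta>)"
  shows "meta_step f xl yl Nl \<alpha> \<beta> xb \<theta> = \<theta> - \<beta> *\<^sub>R ((2 * \<alpha> / CARD('b)) *\<^sub>R
     (\<Sum>i\<in>UNIV. transpose (jacobian (f (xb i)) (at \<theta>)) *v (meta_grad f xl yl Nl \<alpha> xb \<theta> $ i)))"
  unfolding meta_step_def virtual_step_eq[where f=f, OF assms]
  by (simp add: init_labels_def matrix_vector_mult_scaleR scaleR_sum_right[symmetric])

lemma meta_step_descent:
  fixes f :: "'x \<Rightarrow> real^'d \<Rightarrow> real^'c" and xb :: "'b::finite \<Rightarrow> 'x"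
  assumes f_diff: "\<And>x \<theta>. f x differentiable (at \<theta>)"
    and lip: "\<And>\<theta> \<theta>'. norm (grad (labeled_loss f xl yl Nl) \<theta> - grad (labeled_loss f xl yl Nl) \<theta>')
                       \<le> L0 * norm (\<theta> - \<theta>')"
    and jac_bound: "\<And>i \<theta>. onorm (\<lambda>h. jacobian (f (xb i)) (at \<theta>) *v h) \<le> M"
    and \<alpha>: "\<alpha> > 0" and \<beta>: "\<beta> > 0"
    and rate: "4 * M\<^sup>2 * L0 * (\<alpha>\<^sup>2 * \<beta>) < 1"
  shows "labeled_loss f xl yl Nl (meta_step f xl yl Nl \<alpha> \<beta> xb \<theta>) \<le> labeled_loss f xl yl Nl \<theta>
    \<and> (labeled_loss f xl yl Nl (meta_step f xl yl Nl \<alpha> \<beta> xb \<theta>) = labeled_loss f xl yl Nl \<theta>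
        \<longleftrightarrow> meta_grad f xl yl Nl \<alpha> xb \<theta> = 0)"
proof -
  define G where "G = labeled_loss f xl yl Nl"
  define c where "c = 2 * \<alpha> / CARD('b)"
  define J where "J i = jacobian (f (xb i)) (at \<theta>)" for i
  define m where "m = meta_grad f xl yl Nl \<alpha> xb \<theta>"
  define d where "d = c *\<^sub>R (\<Sum>i\<in>UNIV. transpose (J i) *v (m $ i))"
  have step: "meta_step f xl yl Nl \<alpha> \<beta> xb \<theta> = \<theta> - \<beta> *\<^sub>R d"
    unfolding d_def c_def J_def m_def by (rule meta_step_eq[OF f_diff])
  have m: "m = c *\<^sub>R (\<chi> i. J i *v grad G \<theta>)"
    unfolding m_def meta_grad_eq[OF f_diff] by (simp add: vec_eq_iff c_def J_def G_def)
  have slope: "grad G \<theta> \<bullet> d = (norm m)\<^sup>2"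
  proof -
    have "grad G \<theta> \<bullet> d = m \<bullet> (c *\<^sub>R (\<chi> i. J i *v grad G \<theta>))"
      unfolding d_def by (simp only: inner_scaleR_right inner_sum_transpose_mult)
    then show ?thesis
      by (simp only: m[symmetric] power2_norm_eq_inner)
  qed
  have norm_d: "norm d \<le> 2 * \<alpha> * M * norm m"
  proof -
    have "norm d = c * norm (\<Sum>i\<in>UNIV. transpose (J i) *v (m $ i))"
      using \<alpha> by (simp add: d_def c_def)
    also have "\<dots> \<le> c * (CARD('b) * M * norm m)"
      using \<alpha> jac_bound unfolding J_def c_def
      by (intro mult_left_mono norm_sum_transpose_mult_le) simp_all
    also have "\<dots> = 2 * \<alpha> * M * norm m"
      by (simp add: c_def)
    finally show ?thesis .
  qed
  have size: "(norm d)\<^sup>2 \<le> (4 * \<alpha>\<^sup>2 * M\<^sup>2) * (norm m)\<^sup>2"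
    using power_mono[OF norm_d norm_ge_zero, of 2] by (simp add: power_mult_distrib)
  have L0: "L0 \<ge> 0"
    by (rule lipschitz_const_nonneg[OF lip, of 0 "axis undefined 1"]) (simp add: vec_eq_iff axis_def)
  have "L0 * \<beta> * (4 * \<alpha>\<^sup>2 * M\<^sup>2) < 2"
    using rate by (simp add: mult_ac)
  from descent_step_decrease[OF
      has_derivative_labeled_loss[where f=f and xl=xl and yl=yl and Nl=Nl, OF f_diff, folded G_def]
      lip[folded G_def] L0 slope zero_le_power2 size \<beta> this]
  show ?thesis
    unfolding step G_def m_def by simp
qed

theorem theorem1:
  fixes f :: "'x \<Rightarrow> real^'d \<Rightarrow> real^'c"
    and xl :: "nat \<Rightarrow> 'x" and yl :: "nat \<Rightarrow> real^'c" and Nl :: nat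
    and xu :: "nat \<Rightarrow> 'x" and Nu :: nat
    and \<alpha> \<beta> :: "nat \<Rightarrow> real" and \<theta>1 :: "real^'d"
    and xb :: "nat \<Rightarrow> 'b::finite \<Rightarrow> 'x"
    and L0 M :: real
  assumes C1: "\<And>x \<theta>. f x differentiable (at \<theta>)"
    and C1cont: "\<And>x. continuous_on UNIV (\<lambda>\<theta>. jacobian (f x) (at \<theta>))"
    and lip: "\<And>\<theta> \<theta>'. norm (grad (labeled_loss f xl yl Nl) \<theta> - grad (labeled_loss f xl yl Nl) \<theta>')
                       \<le> L0 * norm (\<theta> - \<theta>')"
    and jac_bound: "\<And>i \<theta>. i \<in> {1..Nu} \<Longrightarrow> onorm (\<lambda>h. jacobian (f (xu i)) (at \<theta>) *v h) \<le> M"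
    and batch: "\<And>t j. t \<ge> 1 \<Longrightarrow> xb t j \<in> xu ` {1..Nu}"
    and \<alpha>_pos: "\<And>t. t \<ge> 1 \<Longrightarrow> \<alpha> t > 0"
    and \<beta>_pos: "\<And>t. t \<ge> 1 \<Longrightarrow> \<beta> t > 0"
    and rates: "\<And>t. t \<ge> 1 \<Longrightarrow> 4 * M\<^sup>2 * L0 * ((\<alpha> t)\<^sup>2 * \<beta> t) < 1"
    and t: "t \<ge> 1"
  shows "labeled_loss f xl yl Nl (iterate f xl yl Nl \<alpha> \<beta> xb \<theta>1 (Suc t))
           \<le> labeled_loss f xl yl Nl (iterate f xl yl Nl \<alpha> \<beta> xb \<theta>1 t)
       \<and> (labeled_loss f xl yl Nl (iterate f xl yl Nl \<alpha> \<beta> xb \<theta>1 (Suc t))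
             = labeled_loss f xl yl Nl (iterate f xl yl Nl \<alpha> \<beta> xb \<theta>1 t)
          \<longleftrightarrow> meta_grad f xl yl Nl (\<alpha> t) (xb t) (iterate f xl yl Nl \<alpha> \<beta> xb \<theta>1 t) = 0)"
proof -
  obtain s where t_Suc: "t = Suc s" using t by (cases t) auto
  have batch_jac_bound: "onorm (\<lambda>h. jacobian (f (xb t i)) (at \<theta>) *v h) \<le> M" for i \<theta>
    using batch[OF t, of i] jac_bound by auto
  have "iterate f xl yl Nl \<alpha> \<beta> xb \<theta>1 (Suc t)
      = meta_step f xl yl Nl (\<alpha> t) (\<beta> t) (xb t) (iterate f xl yl Nl \<alpha> \<beta> xb \<theta>1 t)"
    by (simp add: t_Suc)
  then show ?thesis
    using meta_step_descent[OF C1 lip batch_jac_bound \<alpha>_pos[OF t] \<beta>_pos[OF t] rates[OF t]]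
    by simp
qed

end
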